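(* Assume $\mathcal{R}(\Theta^* )\le r$, $\mathcal{R}^*(\Phi(x))\le d$ for all $x\in\mathcal{X}$, and $\|\Phi(x)\|_{\max}\le\phi_{\max}$ for all $x\in\mathcal{X}$. Let $\bar r>0$. Then for every $\Theta\in\mathbb{R}^{k_1\times k_2}$ with $\mathcal{R}(\Theta)\le\bar r$, the largest eigenvalue of the Hessian of $\mathcal{L}_n$ (viewed as a function of $\mathrm{vec}(\Theta)$) at $\Theta$ is at most $4k_1k_2\phi_{\max}^2\exp(2\bar rd)$; i.e. $\mathcal{L}_n$ is $4k_1k_2\phi_{\max}^2\exp(2\bar rd)$-smooth on $\{\Theta:\mathcal{R}(\Theta)\le\bar r\}$.
   Context: Let $\mathcal{X}\subset\mathbb{R}^p$ be a bounded set with finite positive volume and $\mathcal{U}_{\mathcal{X}}$ the uniform distribution on it. $\Phi:\mathcal{X}\to\mathbb{R}^{k_1\times k_2}$ is a natural statistic, $\langle\langle M,N\rangle\rangle=\sum_{i,j}M_{ij}N_{ij}$, $\mathcal{R}$ a norm on $\mathbb{R}^{k_1\times k_2}$ with dual norm $\mathcal{R}^*(M)=\sup\{\langle\langle M,N\rangle\rangle:\mathcal{R}(N)\le1\}$, $\|M\|_{\max}=\max_{ij}|M_{ij}|$, $r,d,\phi_{\max}$ constants, $\Theta^*$ the true parameter of the density $f_{\mathbf{x}}(x;\Theta)\propto\exp(\langle\langle\Theta,\Phi(x)\rangle\rangle)$ on $\mathcal{X}$. Given samples $x^{(1)},\dots,x^{(n)}\in\mathcal{X}$, $\tilde\Phi(x)=\Phi(x)-\mathbb{E}_{\mathcal{U}_{\mathcal{X}}}[\Phi]$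 and $\mathcal{L}_n(\Theta)=\frac1n\sum_{t=1}^n\exp(-\langle\langle\Theta,\tilde\Phi(x^{(t)})\rangle\rangle)$. *)

theory Defs
  imports "HOL-Analysis.Analysis"
begin

text \<open>Matrices in R^(k1 x k2) are rendered as real^'k2^'k1 (row index 'k1, column index 'k2),
  with k1 = CARD('k1), k2 = CARD('k2).\<close>

definition frob_inner :: "real^'k2^'k1 \<Rightarrow> real^'k2^'k1 \<Rightarrow> real" where
  "frob_inner M N = (\<Sum>i\<in>UNIV. \<Sum>j\<in>UNIV. M$i$j * N$i$j)"

definition max_norm :: "real^'k2^'k1 \<Rightarrow> real" where
  "max_norm M = Max {\<bar>M$i$j\<bar> | i j. True}"

definition is_norm :: "(real^'k2^'k1 \<Rightarrow> real) \<Rightarrow> bool" where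
  "is_norm R \<longleftrightarrow> (\<forall>M. 0 \<le> R M) \<and> (\<forall>M. R M = 0 \<longleftrightarrow> M = 0)
     \<and> (\<forall>c M. R (c *\<^sub>R M) = \<bar>c\<bar> * R M) \<and> (\<forall>M N. R (M + N) \<le> R M + R N)"

definition dual_norm :: "(real^'k2^'k1 \<Rightarrow> real) \<Rightarrow> real^'k2^'k1 \<Rightarrow> real" where
  "dual_norm R M = Sup {frob_inner M N | N. R N \<le> 1}"

definition vecm :: "real^'k2^'k1 \<Rightarrow> real^('k1 \<times> 'k2)" where
  "vecm M = (\<chi> ij. M $ fst ij $ snd ij)"

definition unvec :: "real^('k1 \<times> 'k2) \<Rightarrow> real^'k2^'k1" where
  "unvec v = (\<chi> i j. v $ (i, j))"

definition unif_mean :: "('a::euclidean_space) set \<Rightarrow> ('a \<Rightarrow> real^'k2^'k1) \<Rightarrow> real^'k2^'k1" where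
  "unif_mean X Phi = (\<chi> i j. (LINT x:X|lborel. Phi x $ i $ j) / measure lborel X)"

definition centered_stat :: "('a::euclidean_space) set \<Rightarrow> ('a \<Rightarrow> real^'k2^'k1) \<Rightarrow> 'a \<Rightarrow> real^'k2^'k1" where
  "centered_stat X Phi x = Phi x - unif_mean X Phi"

definition loss_n :: "('a::euclidean_space) set \<Rightarrow> ('a \<Rightarrow> real^'k2^'k1) \<Rightarrow> nat \<Rightarrow> (nat \<Rightarrow> 'a)
    \<Rightarrow> real^'k2^'k1 \<Rightarrow> real" where
  "loss_n X Phi n xs Theta =
     (1 / real n) * (\<Sum>t=1..n. exp (- frob_inner Theta (centered_stat X Phi (xs t))))"

definition partial_deriv :: "(real^'n \<Rightarrow> real) \<Rightarrow> 'n \<Rightarrow> real^'n \<Rightarrow> real" where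
  "partial_deriv f k v = deriv (\<lambda>t. f (v + t *\<^sub>R axis k 1)) 0"

definition hessian :: "(real^'n \<Rightarrow> real) \<Rightarrow> real^'n \<Rightarrow> real^'n^'n" where
  "hessian f v = (\<chi> k l. partial_deriv (\<lambda>w. partial_deriv f l w) k v)"

definition is_eigenvalue :: "real^'n^'n \<Rightarrow> real \<Rightarrow> bool" where
  "is_eigenvalue A mu \<longleftrightarrow> (\<exists>v. v \<noteq> 0 \<and> A *v v = mu *\<^sub>R v)"

definition largest_eigenvalue :: "real^'n^'n \<Rightarrow> real" where
  "largest_eigenvalue A = Max {mu. is_eigenvalue A mu}"

end

theory Submission
  imports Defs
begin

(* With c_t = vec (Phi~(x_t)), the loss is L_n(v) = (1/n) * sum_t exp (- <v, c_t>), whose Hessian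
   is the weighted sum of outer products (1/n) * sum_t exp (- <v, c_t>) c_t c_t^T.  Its Rayleigh
   quotient, hence its largest eigenvalue, is at most (1/n) * sum_t exp (- <Theta, Phi~(x_t)>) |c_t|^2.
   Since <Theta, M> <= R(Theta) R*(M), and this bound survives averaging over the uniform
   distribution, each exponent is at most 2 rbar d; every entry of Phi~ is at most 2 phi_max in
   absolute value, so |c_t|^2 <= 4 k1 k2 phi_max^2.  The largest eigenvalue is well defined because
   a symmetric matrix has an eigenvalue (a maximiser of the Rayleigh quotient on the unit sphere)
   and only finitely many (their eigenvectors are pairwise orthogonal). *)

lemma frob_inner_eq_inner: "frob_inner M N = M \<bullet> N"
  by (simp add: frob_inner_def inner_vec_def)

lemma
  assumes "is_norm R"
  shows is_norm_nonneg: "0 \<le> R M"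
    and is_norm_zero: "R 0 = 0"
    and is_norm_eq_0_iff: "R M = 0 \<longleftrightarrow> M = 0"
    and is_norm_scaleR: "R (c *\<^sub>R M) = \<bar>c\<bar> * R M"
    and is_norm_triangle: "R (M + N) \<le> R M + R N"
  using assms by (simp_all add: is_norm_def)

lemma is_norm_pos:
  assumes "is_norm R" "M \<noteq> 0" shows "0 < R M"
  using is_norm_nonneg[OF assms(1)] is_norm_eq_0_iff[OF assms(1)] assms(2)
  by (simp add: order_le_neq_trans)

lemma is_norm_minus:
  assumes "is_norm R" shows "R (- M) = R M"
  using is_norm_scaleR[OF assms, of "-1" M] by simp

lemma is_norm_convex_on:
  assumes "is_norm R" shows "convex_on UNIV R"
proof (rule convex_onI)
  fix t :: real and x y assume "0 < t" "t < 1"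
  have "R ((1 - t) *\<^sub>R x + t *\<^sub>R y) \<le> R ((1 - t) *\<^sub>R x) + R (t *\<^sub>R y)"
    by (rule is_norm_triangle[OF assms])
  also have "\<dots> = (1 - t) * R x + t * R y"
    using \<open>0 < t\<close> \<open>t < 1\<close> by (simp add: is_norm_scaleR[OF assms])
  finally show "R ((1 - t) *\<^sub>R x + t *\<^sub>R y) \<le> (1 - t) * R x + t * R y" .
qed simp

lemma is_norm_lower_bound:
  assumes "is_norm (R :: real^'k2^'k1 \<Rightarrow> real)"
  obtains m where "0 < m" "\<And>N. m * norm N \<le> R N"
proof -
  have ne: "sphere (0::real^'k2^'k1) 1 \<noteq> {}"
    by (simp add: sphere_eq_empty)
  have "continuous_on (sphere 0 1) R"
    using convex_on_continuous[OF open_UNIV is_norm_convex_on[OF assms]] continuous_on_subset by blast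
  then obtain u where u: "u \<in> sphere 0 1" and u_min: "\<And>N. N \<in> sphere 0 1 \<Longrightarrow> R u \<le> R N"
    using continuous_attains_inf[OF compact_sphere ne] by blast
  have pos: "0 < R u" using u by (intro is_norm_pos[OF assms]) auto
  have bound: "R u * norm N \<le> R N" for N
  proof (cases "N = 0")
    case False
    have "R u \<le> R ((1 / norm N) *\<^sub>R N)" by (rule u_min) (use False in simp)
    also have "\<dots> = R N / norm N" by (simp add: is_norm_scaleR[OF assms])
    finally show ?thesis using False by (simp add: field_simps)
  qed (simp add: is_norm_nonneg[OF assms])
  show thesis by (rule that[OF pos bound])
qed

lemma bdd_above_dual_norm_set:
  assumes "is_norm R" shows "bdd_above {frob_inner M N | N. R N \<le> 1}"
proof -
  obtain m where m: "0 < m" "\<And>N. m * norm N \<le> R N"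
    using is_norm_lower_bound[OF assms] by blast
  show ?thesis
  proof (rule bdd_aboveI, safe)
    fix N assume "R N \<le> 1"
    then have "norm N \<le> 1 / m" using m(2)[of N] m(1) by (simp add: field_simps)
    have "frob_inner M N \<le> norm M * norm N"
      unfolding frob_inner_eq_inner by (rule norm_cauchy_schwarz)
    also have "\<dots> \<le> norm M / m" using mult_left_mono[OF \<open>norm N \<le> 1 / m\<close>] by simp
    finally show "frob_inner M N \<le> norm M / m" .
  qed
qed

lemma dual_norm_nonneg:
  assumes "is_norm R" shows "0 \<le> dual_norm R M"
  unfolding dual_norm_def
  by (rule cSup_upper2[OF _ order.refl bdd_above_dual_norm_set[OF assms]])
    (use is_norm_zero[OF assms] in \<open>auto simp: frob_inner_eq_inner intro!: exI[of _ 0]\<close>)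

lemma frob_inner_le_dual_norm:
  assumes "is_norm R" shows "frob_inner M N \<le> R N * dual_norm R M"
proof (cases "N = 0")
  case False
  then have "0 < R N" by (rule is_norm_pos[OF assms])
  then have "R ((1 / R N) *\<^sub>R N) \<le> 1" by (simp add: is_norm_scaleR[OF assms])
  then have "frob_inner M ((1 / R N) *\<^sub>R N) \<le> dual_norm R M"
    unfolding dual_norm_def by (intro cSup_upper bdd_above_dual_norm_set[OF assms]) blast
  with \<open>0 < R N\<close> show ?thesis by (simp add: frob_inner_eq_inner field_simps)
qed (simp add: frob_inner_eq_inner is_norm_zero[OF assms])

lemma inner_le_of_norm_le_dual_norm_le:
  assumes "is_norm R" "R N \<le> r" "dual_norm R M \<le> d"
  shows "N \<bullet> M \<le> r * d"
proof -
  have "N \<bullet> M \<le> R N * dual_norm R M"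
    using frob_inner_le_dual_norm[OF assms(1)] by (simp add: frob_inner_eq_inner inner_commute)
  also have "\<dots> \<le> r * d"
    using assms order_trans[OF is_norm_nonneg[OF assms(1)] assms(2)] dual_norm_nonneg[OF assms(1)]
    by (intro mult_mono) auto
  finally show ?thesis .
qed

lemma symmetric_matrix_inner:
  fixes A :: "real^'n^'n"
  assumes "transpose A = A" shows "(A *v x) \<bullet> y = x \<bullet> (A *v y)"
  by (metis assms dot_lmul_matrix inner_commute vector_transpose_matrix)

lemma linear_coeff_eq_0_if_quadratic_nonneg:
  fixes a b :: real assumes "\<And>t. 0 \<le> a * t + b * t\<^sup>2" shows "a = 0"
proof (rule ccontr)
  assume "a \<noteq> 0"
  define c where "c = \<bar>b\<bar> + 1"
  have "c > 0" "b < c" unfolding c_def by auto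
  have "a * (- a / c) + b * (- a / c)\<^sup>2 = a\<^sup>2 / c\<^sup>2 * (b - c)"
    using \<open>c > 0\<close> by (simp add: field_simps power2_eq_square)
  also have "\<dots> < 0"
    using \<open>a \<noteq> 0\<close> \<open>c > 0\<close> \<open>b < c\<close> by (intro mult_pos_neg divide_pos_pos) auto
  finally show False using assms[of "- a / c"] by simp
qed

lemma rayleigh_maximizer_is_eigenvector:
  fixes A :: "real^'n^'n"
  assumes sym: "transpose A = A" and le: "\<And>u. u \<bullet> (A *v u) \<le> lam * (u \<bullet> u)"
    and eq: "x \<bullet> (A *v x) = lam * (x \<bullet> x)"
  shows "A *v x = lam *\<^sub>R x"
proof -
  define y where "y = A *v x - lam *\<^sub>R x"
  have "0 \<le> (- 2 * (y \<bullet> y)) * t + (lam * (y \<bullet> y) - y \<bullet> (A *v y)) * t\<^sup>2" for t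
  proof -
    have "0 \<le> lam * ((x + t *\<^sub>R y) \<bullet> (x + t *\<^sub>R y)) - (x + t *\<^sub>R y) \<bullet> (A *v (x + t *\<^sub>R y))"
      using le by simp
    also have "\<dots> = t * (2 * lam * (x \<bullet> y) - y \<bullet> (A *v x) - x \<bullet> (A *v y))
        + (lam * (y \<bullet> y) - y \<bullet> (A *v y)) * t\<^sup>2"
      using eq by (simp add: matrix_vector_right_distrib matrix_vector_mult_scaleR inner_add_left
          inner_add_right inner_commute[of y x] algebra_simps power2_eq_square)
    also have "2 * lam * (x \<bullet> y) - y \<bullet> (A *v x) - x \<bullet> (A *v y) = - 2 * (y \<bullet> y)"
      using symmetric_matrix_inner[OF sym, of y x]
      by (simp add: y_def inner_diff_left inner_diff_right inner_commute algebra_simps)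
    finally show ?thesis by (simp add: mult.commute)
  qed
  then have "- 2 * (y \<bullet> y) = 0" by (rule linear_coeff_eq_0_if_quadratic_nonneg)
  then show ?thesis by (simp add: y_def)
qed

lemma symmetric_matrix_has_eigenvalue:
  fixes A :: "real^'n^'n"
  assumes sym: "transpose A = A" shows "\<exists>mu. is_eigenvalue A mu"
proof -
  have ne: "sphere (0::real^'n) 1 \<noteq> {}" by (simp add: sphere_eq_empty)
  have "continuous_on (sphere 0 1) (\<lambda>u. u \<bullet> (A *v u))"
    by (intro continuous_intros linear_continuous_on matrix_vector_mul_linear)
  then obtain v where v: "v \<in> sphere 0 1"
    and v_max: "\<And>u. u \<in> sphere 0 1 \<Longrightarrow> u \<bullet> (A *v u) \<le> v \<bullet> (A *v v)"
    using continuous_attains_sup[OF compact_sphere ne] by blast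
  define lam where "lam = v \<bullet> (A *v v)"
  have "u \<bullet> (A *v u) \<le> lam * (u \<bullet> u)" for u
  proof (cases "u = 0")
    case False
    have "(u /\<^sub>R norm u) \<bullet> (A *v (u /\<^sub>R norm u)) \<le> lam"
      unfolding lam_def by (rule v_max) (use False in simp)
    then show ?thesis
      using False by (simp add: matrix_vector_mult_scaleR field_simps power2_norm_eq_inner[symmetric]
          power2_eq_square)
  qed simp
  moreover have "v \<bullet> (A *v v) = lam * (v \<bullet> v)"
    using v by (simp add: lam_def dot_square_norm)
  ultimately have "A *v v = lam *\<^sub>R v" by (rule rayleigh_maximizer_is_eigenvector[OF sym])
  moreover have "v \<noteq> 0" using v by auto
  ultimately show ?thesis unfolding is_eigenvalue_def by blast
qed

lemma finite_eigenvalues_symmetric: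
  fixes A :: "real^'n^'n"
  assumes sym: "transpose A = A" shows "finite {mu. is_eigenvalue A mu}"
proof -
  define E where "E = {mu. is_eigenvalue A mu}"
  have "\<forall>mu\<in>E. \<exists>v. v \<noteq> 0 \<and> A *v v = mu *\<^sub>R v"
    unfolding E_def is_eigenvalue_def by blast
  then obtain w where w_all: "\<forall>mu\<in>E. w mu \<noteq> 0 \<and> A *v w mu = mu *\<^sub>R w mu"
    by (rule bchoice[THEN exE])
  then have w: "\<And>mu. mu \<in> E \<Longrightarrow> w mu \<noteq> 0 \<and> A *v w mu = mu *\<^sub>R w mu" by blast
  have orth: "w mu \<bullet> w nu = 0" if "mu \<in> E" "nu \<in> E" "mu \<noteq> nu" for mu nu
  proof -
    have "mu * (w mu \<bullet> w nu) = (A *v w mu) \<bullet> w nu" using w[OF that(1)] by simp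
    also have "\<dots> = w mu \<bullet> (A *v w nu)" by (rule symmetric_matrix_inner[OF sym])
    also have "\<dots> = nu * (w mu \<bullet> w nu)" using w[OF that(2)] by simp
    finally show ?thesis using that(3) by simp
  qed
  have "inj_on w E"
  proof (rule inj_onI)
    fix mu nu assume mu: "mu \<in> E" and nu: "nu \<in> E" and eq: "w mu = w nu"
    have "mu *\<^sub>R w mu = A *v w mu" using w[OF mu] by simp
    also have "\<dots> = nu *\<^sub>R w mu" using w[OF nu] eq by simp
    finally show "mu = nu" using w[OF mu] by simp
  qed
  moreover have "independent (w ` E)"
  proof (rule pairwise_orthogonal_independent)
    show "pairwise orthogonal (w ` E)"
      unfolding pairwise_def orthogonal_def using orth by fastforce
    show "0 \<notin> w ` E" using w by fastforce
  qed
  then have "finite (w ` E)" using independent_bound by blast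
  ultimately show ?thesis unfolding E_def[symmetric] by (rule finite_imageD[rotated])
qed

lemma largest_eigenvalue_le:
  fixes A :: "real^'n^'n"
  assumes sym: "transpose A = A" and bound: "\<And>v. v \<bullet> (A *v v) \<le> B * (v \<bullet> v)"
  shows "largest_eigenvalue A \<le> B"
  unfolding largest_eigenvalue_def
proof (rule Max.boundedI)
  show "finite {mu. is_eigenvalue A mu}" by (rule finite_eigenvalues_symmetric[OF sym])
  show "{mu. is_eigenvalue A mu} \<noteq> {}" using symmetric_matrix_has_eigenvalue[OF sym] by blast
next
  fix mu assume "mu \<in> {mu. is_eigenvalue A mu}"
  then obtain v where "v \<noteq> 0" "A *v v = mu *\<^sub>R v" unfolding is_eigenvalue_def by blast
  then have "mu * (v \<bullet> v) \<le> B * (v \<bullet> v)" using bound[of v] by simp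
  with \<open>v \<noteq> 0\<close> show "mu \<le> B" by simp
qed

(* The derivative is stated in the shape of the input, so that it can be applied twice. *)
lemma partial_deriv_exp_sum:
  fixes c :: "'t \<Rightarrow> real^'n" assumes "finite S"
  shows "partial_deriv (\<lambda>v. \<Sum>t\<in>S. b t * exp (- (v \<bullet> c t))) k w
    = (\<Sum>t\<in>S. (- c t $ k * b t) * exp (- (w \<bullet> c t)))"
proof -
  have "((\<lambda>s. \<Sum>t\<in>S. b t * exp (- (w \<bullet> c t + s * c t $ k))) has_field_derivative
      (\<Sum>t\<in>S. (- c t $ k * b t) * exp (- (w \<bullet> c t)))) (at 0)"
    by (rule derivative_eq_intros refl | simp add: mult_ac)+
  then show ?thesis
    unfolding partial_deriv_def by (simp add: inner_add_left inner_axis' DERIV_imp_deriv)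
qed

lemma hessian_exp_sum:
  fixes c :: "'t \<Rightarrow> real^'n" assumes "finite S"
  shows "hessian (\<lambda>v. \<Sum>t\<in>S. b t * exp (- (v \<bullet> c t))) w
    = (\<chi> k l. \<Sum>t\<in>S. b t * exp (- (w \<bullet> c t)) * c t $ k * c t $ l)"
  unfolding hessian_def partial_deriv_exp_sum[OF assms] by (simp add: mult_ac)

lemma quadratic_form_outer_sum:
  fixes c :: "'t \<Rightarrow> real^'n"
  shows "v \<bullet> ((\<chi> k l. \<Sum>t\<in>S. a t * c t $ k * c t $ l) *v v) = (\<Sum>t\<in>S. a t * (c t \<bullet> v)\<^sup>2)"
  by (simp add: matrix_vector_mult_def inner_vec_def sum_distrib_left sum_distrib_right
      power2_eq_square sum.swap[of _ S] mult_ac)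

lemma largest_eigenvalue_outer_sum_le:
  fixes c :: "'t \<Rightarrow> real^'n"
  assumes "\<And>t. t \<in> S \<Longrightarrow> 0 \<le> a t"
  shows "largest_eigenvalue (\<chi> k l. \<Sum>t\<in>S. a t * c t $ k * c t $ l)
    \<le> (\<Sum>t\<in>S. a t * (c t \<bullet> c t))"
proof (rule largest_eigenvalue_le)
  show "transpose (\<chi> k l. \<Sum>t\<in>S. a t * c t $ k * c t $ l)
      = (\<chi> k l. \<Sum>t\<in>S. a t * c t $ k * c t $ l)"
    by (simp add: transpose_def mult_ac)
  fix v :: "real^'n"
  have "(\<Sum>t\<in>S. a t * (c t \<bullet> v)\<^sup>2) \<le> (\<Sum>t\<in>S. a t * ((c t \<bullet> c t) * (v \<bullet> v)))"
    by (intro sum_mono mult_left_mono Cauchy_Schwarz_ineq assms)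
  then show "v \<bullet> ((\<chi> k l. \<Sum>t\<in>S. a t * c t $ k * c t $ l) *v v)
      \<le> (\<Sum>t\<in>S. a t * (c t \<bullet> c t)) * (v \<bullet> v)"
    unfolding quadratic_form_outer_sum by (simp add: sum_distrib_right mult.assoc)
qed

lemma inner_self_le_of_abs_entries_le:
  fixes M :: "real^'k2^'k1" and a :: real
  assumes "\<And>i j. \<bar>M $ i $ j\<bar> \<le> a"
  shows "M \<bullet> M \<le> CARD('k1) * CARD('k2) * a\<^sup>2"
proof -
  have "M \<bullet> M = (\<Sum>i\<in>UNIV. \<Sum>j\<in>UNIV. \<bar>M $ i $ j\<bar>\<^sup>2)"
    by (simp add: inner_vec_def power2_eq_square)
  also have "\<dots> \<le> (\<Sum>i\<in>(UNIV::'k1 set). \<Sum>j\<in>(UNIV::'k2 set). a\<^sup>2)"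
    using assms by (intro sum_mono power_mono) auto
  also have "\<dots> = CARD('k1) * CARD('k2) * a\<^sup>2" by simp
  finally show ?thesis .
qed

lemma abs_entry_le_max_norm: "\<bar>M $ i $ j\<bar> \<le> max_norm M"
proof -
  have "{\<bar>M $ i $ j\<bar> | i j. True} = (\<lambda>(i, j). \<bar>M $ i $ j\<bar>) ` UNIV" by auto
  then have "finite {\<bar>M $ i $ j\<bar> | i j. True}" by simp
  then show ?thesis unfolding max_norm_def by (rule Max_ge) blast
qed

lemma sum_UNIV_prod:
  "(\<Sum>ij\<in>UNIV. g ij) = (\<Sum>i\<in>UNIV. \<Sum>j\<in>UNIV. g (i, j))"
  by (simp add: sum.cartesian_product)

lemma inner_vecm: "vecm M \<bullet> vecm N = M \<bullet> N"
  unfolding inner_vec_def[of "vecm M"] sum_UNIV_prod by (simp add: vecm_def inner_vec_def)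

lemma frob_inner_unvec: "frob_inner (unvec v) M = v \<bullet> vecm M"
  unfolding inner_vec_def sum_UNIV_prod by (simp add: frob_inner_def unvec_def vecm_def)

lemma loss_n_unvec:
  "loss_n X Phi n xs (unvec v)
    = (\<Sum>t\<in>{1..n}. (1 / real n) * exp (- (v \<bullet> vecm (centered_stat X Phi (xs t)))))"
  by (simp add: loss_n_def frob_inner_unvec sum_distrib_left)

lemma
  fixes f :: "'i \<Rightarrow> 'a \<Rightarrow> real"
  assumes "\<And>i. i \<in> I \<Longrightarrow> set_integrable M A (f i)"
  shows set_integrable_sum: "set_integrable M A (\<lambda>x. \<Sum>i\<in>I. f i x)"
    and set_integral_sum: "(LINT x:A|M. \<Sum>i\<in>I. f i x) = (\<Sum>i\<in>I. LINT x:A|M. f i x)"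
  using assms
  by (simp_all add: set_integrable_def set_lebesgue_integral_def sum_distrib_left integral_sum
      integrable_sum)

lemma
  fixes Phi :: "'a \<Rightarrow> real^'k2^'k1"
  assumes "\<forall>i j. set_integrable M A (\<lambda>x. Phi x $ i $ j)"
  shows set_integrable_inner: "set_integrable M A (\<lambda>x. Theta \<bullet> Phi x)"
    and set_integral_inner:
      "(LINT x:A|M. Theta \<bullet> Phi x) = Theta \<bullet> (\<chi> i j. LINT x:A|M. Phi x $ i $ j)"
  using assms
  by (simp_all add: inner_vec_def set_integrable_sum set_integral_sum set_integrable_mult_right)

lemma set_integral_le_const_measure:
  fixes f :: "'a \<Rightarrow> real"
  assumes "set_integrable M A f" "A \<in> sets M" "emeasure M A < \<infinity>" "\<And>x. x \<in> A \<Longrightarrow> f x \<le> K"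
  shows "(LINT x:A|M. f x) \<le> K * measure M A"
proof -
  have "set_integrable M A (\<lambda>_. K)"
    using assms(2,3) unfolding set_integrable_def
    by (intro integrable_scaleR_left integrable_real_indicator) auto
  then have "(LINT x:A|M. f x) \<le> (LINT x:A|M. K)" by (rule set_integral_mono[OF assms(1) _ assms(4)])
  also have "\<dots> = K * measure M A" using assms(2,3) by (simp add: set_integral_const)
  finally show ?thesis .
qed

lemma inner_unif_mean_le:
  fixes Phi :: "'a::euclidean_space \<Rightarrow> real^'k2^'k1"
  assumes "X \<in> sets lborel" "0 < emeasure lborel X" "emeasure lborel X < \<infinity>"
    and "\<forall>i j. set_integrable lborel X (\<lambda>x. Phi x $ i $ j)"
    and "\<And>x. x \<in> X \<Longrightarrow> Theta \<bullet> Phi x \<le> K"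
  shows "Theta \<bullet> unif_mean X Phi \<le> K"
proof -
  have "0 < measure lborel X" using assms(2,3) by (simp add: measure_def enn2real_positive_iff)
  moreover have "(LINT x:X|lborel. Theta \<bullet> Phi x) \<le> K * measure lborel X"
    using assms by (intro set_integral_le_const_measure set_integrable_inner)
  ultimately show ?thesis
    using set_integral_inner[OF assms(4), of Theta]
    by (simp add: unif_mean_def inner_vec_def sum_divide_distrib[symmetric] pos_divide_le_eq)
qed

lemma abs_unif_mean_le:
  fixes Phi :: "'a::euclidean_space \<Rightarrow> real^'k2^'k1"
  assumes "X \<in> sets lborel" "0 < emeasure lborel X" "emeasure lborel X < \<infinity>"
    and "\<forall>i j. set_integrable lborel X (\<lambda>x. Phi x $ i $ j)"
    and "\<And>x. x \<in> X \<Longrightarrow> \<bar>Phi x $ i $ j\<bar> \<le> a"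
  shows "\<bar>unif_mean X Phi $ i $ j\<bar> \<le> a"
proof -
  have entry: "axis i (axis j s) \<bullet> M = s * M $ i $ j" for s and M :: "real^'k2^'k1"
    by (simp add: inner_axis')
  have "axis i (axis j s) \<bullet> unif_mean X Phi \<le> a" if "s \<in> {1, -1}" for s
    by (rule inner_unif_mean_le[OF assms(1-4)])
      (use assms(5) that in \<open>auto simp: entry abs_le_iff\<close>)
  from this[of 1] this[of "-1"] show ?thesis by (simp add: entry abs_le_iff)
qed

lemma abs_centered_stat_le:
  fixes Phi :: "'a::euclidean_space \<Rightarrow> real^'k2^'k1"
  assumes "X \<in> sets lborel" "0 < emeasure lborel X" "emeasure lborel X < \<infinity>"
    and "\<forall>i j. set_integrable lborel X (\<lambda>x. Phi x $ i $ j)"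
    and "\<And>x i j. x \<in> X \<Longrightarrow> \<bar>Phi x $ i $ j\<bar> \<le> a" and "x \<in> X"
  shows "\<bar>centered_stat X Phi x $ i $ j\<bar> \<le> 2 * a"
  using abs_triangle_ineq4[of "Phi x $ i $ j" "unif_mean X Phi $ i $ j"]
    abs_unif_mean_le[OF assms(1-4), of i j a] assms(5)[OF assms(6), of i j] assms(5)
  by (simp add: centered_stat_def)

lemma neg_inner_centered_stat_le:
  fixes Phi :: "'a::euclidean_space \<Rightarrow> real^'k2^'k1"
  assumes "X \<in> sets lborel" "0 < emeasure lborel X" "emeasure lborel X < \<infinity>"
    and "\<forall>i j. set_integrable lborel X (\<lambda>x. Phi x $ i $ j)"
    and R: "is_norm R" and "R Theta \<le> r" and "\<And>x. x \<in> X \<Longrightarrow> dual_norm R (Phi x) \<le> d"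
    and "x \<in> X"
  shows "- (Theta \<bullet> centered_stat X Phi x) \<le> 2 * r * d"
proof -
  have "(- Theta) \<bullet> Phi x \<le> r * d"
    using assms(6-8) by (intro inner_le_of_norm_le_dual_norm_le[OF R]) (simp_all add: is_norm_minus[OF R])
  moreover have "Theta \<bullet> unif_mean X Phi \<le> r * d"
    using assms(6,7) by (intro inner_unif_mean_le[OF assms(1-4)] inner_le_of_norm_le_dual_norm_le[OF R])
  ultimately show ?thesis by (simp add: centered_stat_def inner_diff_right)
qed

lemma hessian_term_centered_stat_le:
  fixes Phi :: "'a::euclidean_space \<Rightarrow> real^'k2^'k1"
  assumes "X \<in> sets lborel" "0 < emeasure lborel X" "emeasure lborel X < \<infinity>"
    and "\<forall>i j. set_integrable lborel X (\<lambda>x. Phi x $ i $ j)"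
    and "is_norm R" and "R Theta \<le> r" and "\<And>x. x \<in> X \<Longrightarrow> dual_norm R (Phi x) \<le> d"
    and "\<And>x. x \<in> X \<Longrightarrow> max_norm (Phi x) \<le> phi" and "x \<in> X"
  shows "exp (- (Theta \<bullet> centered_stat X Phi x)) * (centered_stat X Phi x \<bullet> centered_stat X Phi x)
    \<le> 4 * real CARD('k1) * real CARD('k2) * phi\<^sup>2 * exp (2 * r * d)"
proof -
  have "exp (- (Theta \<bullet> centered_stat X Phi x)) \<le> exp (2 * r * d)"
    using assms(1-7,9) by (simp add: neg_inner_centered_stat_le)
  moreover have "centered_stat X Phi x \<bullet> centered_stat X Phi x \<le> CARD('k1) * CARD('k2) * (2 * phi)\<^sup>2"
    using assms(1-4,8,9) abs_entry_le_max_norm order_trans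
    by (intro inner_self_le_of_abs_entries_le abs_centered_stat_le) blast+
  ultimately have "exp (- (Theta \<bullet> centered_stat X Phi x)) * (centered_stat X Phi x \<bullet> centered_stat X Phi x)
      \<le> exp (2 * r * d) * (CARD('k1) * CARD('k2) * (2 * phi)\<^sup>2)"
    by (intro mult_mono) auto
  then show ?thesis by (simp add: power_mult_distrib mult_ac)
qed

theorem propositionB1:
  fixes X :: "(real^'p) set"
    and Phi :: "real^'p \<Rightarrow> real^'k2^'k1"
    and R :: "real^'k2^'k1 \<Rightarrow> real"
    and Theta_star :: "real^'k2^'k1"
    and r d phi_max rbar :: real
    and n :: nat and xs :: "nat \<Rightarrow> real^'p"
  assumes "bounded X" and "X \<in> sets lborel"
    and "0 < emeasure lborel X" and "emeasure lborel X < \<infinity>"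
    and "\<forall>i j. set_integrable lborel X (\<lambda>x. Phi x $ i $ j)"
    and "is_norm R"
    and "R Theta_star \<le> r"
    and "\<forall>x\<in>X. dual_norm R (Phi x) \<le> d"
    and "\<forall>x\<in>X. max_norm (Phi x) \<le> phi_max"
    and "\<forall>t\<in>{1..n}. xs t \<in> X"
    and "0 < rbar"
  shows "\<forall>Theta. R Theta \<le> rbar \<longrightarrow>
    largest_eigenvalue (hessian (\<lambda>v. loss_n X Phi n xs (unvec v)) (vecm Theta))
      \<le> 4 * real CARD('k1) * real CARD('k2) * phi_max^2 * exp (2 * rbar * d)"
proof (intro allI impI)
  fix Theta :: "real^'k2^'k1" assume "R Theta \<le> rbar"
  define c where "c t = vecm (centered_stat X Phi (xs t))" for t
  define B where "B = 4 * real CARD('k1) * real CARD('k2) * phi_max^2 * exp (2 * rbar * d)"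
  define a where "a t = 1 / real n * exp (- (vecm Theta \<bullet> c t))" for t
  have hessian_eq: "hessian (\<lambda>v. loss_n X Phi n xs (unvec v)) (vecm Theta)
      = (\<chi> k l. \<Sum>t\<in>{1..n}. a t * c t $ k * c t $ l)"
    unfolding loss_n_unvec c_def[symmetric] hessian_exp_sum[OF finite_atLeastAtMost] a_def ..
  have "largest_eigenvalue (\<chi> k l. \<Sum>t\<in>{1..n}. a t * c t $ k * c t $ l)
      \<le> (\<Sum>t\<in>{1..n}. a t * (c t \<bullet> c t))"
    by (rule largest_eigenvalue_outer_sum_le) (simp add: a_def)
  also have "\<dots> \<le> (\<Sum>t\<in>{1..n}. 1 / real n * B)"
    unfolding a_def mult.assoc
  proof (intro sum_mono mult_left_mono)
    fix t assume "t \<in> {1..n}"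
    then show "exp (- (vecm Theta \<bullet> c t)) * (c t \<bullet> c t) \<le> B"
      unfolding c_def inner_vecm B_def
      by (intro hessian_term_centered_stat_le[OF assms(2-6) \<open>R Theta \<le> rbar\<close>]) (use assms(8-10) in auto)
  qed simp
  also have "\<dots> \<le> B"
    unfolding B_def by (cases "n = 0") simp_all
  finally show "largest_eigenvalue (hessian (\<lambda>v. loss_n X Phi n xs (unvec v)) (vecm Theta)) \<le> B"
    unfolding hessian_eq .
qed

end
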